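(* Let $f=(a,b,c,d)$ be a reduced binary cubic form over $\mathbb{F}_q[t]$ of discriminant $D$ with imaginary or unusual Hessian $(P,Q,R)$. Then $|a|\le|D|^{1/4}$, $|b|\le|D|^{1/4}$, $|bc|\le|D|^{1/2}$ and $|ad|\le|D|^{1/2}$.
   Context: $\mathbb{F}_q$ is a finite field with $\gcd(q,6)=1$; $|H|=q^{\deg H}$ for nonzero $H\in\mathbb{F}_q[t]$, $|0|=0$, $\mathrm{sgn}(H)$ = leading coefficient. A binary cubic form $(a,b,c,d)=ax^3+bx^2y+cxy^2+dy^3$ over $\mathbb{F}_q[t]$ has discriminant $D=18abcd+b^2c^2-4ac^3-4b^3d-27a^2d^2$ and Hessian $H_f=(P,Q,R)$, $P=b^2-3ac$, $Q=bc-9ad$, $R=c^2-3bd$, of discriminant $-3D$. $\Delta$ is imaginary if $\deg\Delta$ odd, unusual if $\deg\Delta$ even and $\mathrm{sgn}(\Delta)$ a non-square in $\mathbb{F}_q^*$. Fix a primitive root $h$ of $\mathbb{F}_q^*$, $S=\{h^i:0\le i\le (q-3)/2\}$; assume $\mathrm{sgn}(-3D)\in\{1,h\}$ and $f$ primitive, irreducible. A binary quadratic form $(A,B,C)$ is partially reduced if $|B|<|A|\le|C|$; if $|A|<|C|$ then $\mathrm{sgn}(A)\in\{1,h\}$, if $|A|=|C|$ then $\mathrm{sgn}(A)=1$; and $B\ne0$ implies $\mathrm{sgn}(B)\in S$; it is reduced if partially reduced and either $|A|<|C|$ or it is lexicographically smallest among partially reduced forms in its equivalence class (equivalence via matrices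 over $\mathbb{F}_q[t]$ with determinant in $\mathbb{F}_q^*$, acting by $(f\circ M)(x,y)=f(\alpha x+\beta y,\gamma x+\delta y)$). A cubic form $f$ is reduced if $H_f$ is reduced, $\mathrm{sgn}(a)\in S$, $Q=0$ implies $\mathrm{sgn}(d)\in S$, and, when $H_f$ is unusual, $f$ is lexicographically smallest among all equivalent cubic forms with the same Hessian satisfying these conditions. *)

theory Defs
  imports Complex_Main "HOL-Computational_Algebra.Polynomial"
begin

type_synonym 'a qform = "'a \<times> 'a \<times> 'a"
type_synonym 'a cform = "'a \<times> 'a \<times> 'a \<times> 'a"

definition absv :: "'a::{field,finite} poly \<Rightarrow> nat" where
  "absv H = (if H = 0 then 0 else card (UNIV :: 'a set) ^ degree H)"

definition primitive_root :: "'a::{field,finite} \<Rightarrow> bool" where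
  "primitive_root h \<longleftrightarrow> h \<noteq> 0 \<and> (\<forall>x. x \<noteq> 0 \<longrightarrow> (\<exists>i::nat. x = h ^ i))"

definition Sset :: "'a::{field,finite} \<Rightarrow> 'a set" where
  "Sset h = {h ^ i | i. i \<le> (card (UNIV :: 'a set) - 3) div 2}"

definition cubic_disc :: "'a::comm_ring_1 cform \<Rightarrow> 'a" where
  "cubic_disc f = (case f of (a, b, c, d) \<Rightarrow>
     18*a*b*c*d + b^2*c^2 - 4*a*c^3 - 4*b^3*d - 27*a^2*d^2)"

definition hessian :: "'a::comm_ring_1 cform \<Rightarrow> 'a qform" where
  "hessian f = (case f of (a, b, c, d) \<Rightarrow> (b^2 - 3*a*c, b*c - 9*a*d, c^2 - 3*b*d))"

definition quad_disc :: "'a::comm_ring_1 qform \<Rightarrow> 'a" where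
  "quad_disc F = (case F of (A, B, C) \<Rightarrow> B^2 - 4*A*C)"

definition imaginary :: "'a::field poly \<Rightarrow> bool" where
  "imaginary \<Delta> \<longleftrightarrow> odd (degree \<Delta>)"

definition unusual :: "'a::field poly \<Rightarrow> bool" where
  "unusual \<Delta> \<longleftrightarrow> even (degree \<Delta>) \<and> \<not> (\<exists>x. lead_coeff \<Delta> = x * x)"

text \<open>Action (F o M)(x,y) = F(alpha x + beta y, gamma x + delta y).\<close>
definition quad_act :: "'a::comm_ring_1 qform \<Rightarrow> 'a \<Rightarrow> 'a \<Rightarrow> 'a \<Rightarrow> 'a \<Rightarrow> 'a qform" where
  "quad_act F \<alpha> \<beta> \<gamma> \<delta> = (case F of (A, B, C) \<Rightarrow>
     (A*\<alpha>^2 + B*\<alpha>*\<gamma> + C*\<gamma>^2,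
      2*A*\<alpha>*\<beta> + B*(\<alpha>*\<delta> + \<beta>*\<gamma>) + 2*C*\<gamma>*\<delta>,
      A*\<beta>^2 + B*\<beta>*\<delta> + C*\<delta>^2))"

definition cubic_act :: "'a::comm_ring_1 cform \<Rightarrow> 'a \<Rightarrow> 'a \<Rightarrow> 'a \<Rightarrow> 'a \<Rightarrow> 'a cform" where
  "cubic_act f \<alpha> \<beta> \<gamma> \<delta> = (case f of (a, b, c, d) \<Rightarrow>
     (a*\<alpha>^3 + b*\<alpha>^2*\<gamma> + c*\<alpha>*\<gamma>^2 + d*\<gamma>^3,
      3*a*\<alpha>^2*\<beta> + b*(\<alpha>^2*\<delta> + 2*\<alpha>*\<beta>*\<gamma>) + c*(\<beta>*\<gamma>^2 + 2*\<alpha>*\<gamma>*\<delta>) + 3*d*\<gamma>^2*\<delta>,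
      3*a*\<alpha>*\<beta>^2 + b*(2*\<alpha>*\<beta>*\<delta> + \<beta>^2*\<gamma>) + c*(\<alpha>*\<delta>^2 + 2*\<beta>*\<gamma>*\<delta>) + 3*d*\<gamma>*\<delta>^2,
      a*\<beta>^3 + b*\<beta>^2*\<delta> + c*\<beta>*\<delta>^2 + d*\<delta>^3))"

definition admissible :: "'a::field poly \<Rightarrow> 'a poly \<Rightarrow> 'a poly \<Rightarrow> 'a poly \<Rightarrow> bool" where
  "admissible \<alpha> \<beta> \<gamma> \<delta> \<longleftrightarrow> (\<exists>u. u \<noteq> 0 \<and> \<alpha>*\<delta> - \<beta>*\<gamma> = [:u:])"

definition quad_equiv :: "'a::field poly qform \<Rightarrow> 'a poly qform \<Rightarrow> bool" where
  "quad_equiv F G \<longleftrightarrow> (\<exists>\<alpha> \<beta> \<gamma> \<delta>. admissible \<alpha> \<beta> \<gamma> \<delta> \<and> G = quad_act F \<alpha> \<beta> \<gamma> \<delta>)"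

definition cubic_equiv :: "'a::field poly cform \<Rightarrow> 'a poly cform \<Rightarrow> bool" where
  "cubic_equiv f g \<longleftrightarrow> (\<exists>\<alpha> \<beta> \<gamma> \<delta>. admissible \<alpha> \<beta> \<gamma> \<delta> \<and> g = cubic_act f \<alpha> \<beta> \<gamma> \<delta>)"

definition lex_le :: "('b \<Rightarrow> 'b \<Rightarrow> bool) \<Rightarrow> 'b list \<Rightarrow> 'b list \<Rightarrow> bool" where
  "lex_le lt xs ys \<longleftrightarrow> xs = ys \<or> (xs, ys) \<in> lexord {(x, y). lt x y}"

definition partially_reduced :: "'a::{field,finite} \<Rightarrow> 'a poly qform \<Rightarrow> bool" where
  "partially_reduced h F = (case F of (A, B, C) \<Rightarrow>
     absv B < absv A \<and> absv A \<le> absv C \<and>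
     (absv A < absv C \<longrightarrow> lead_coeff A \<in> {1, h}) \<and>
     (absv A = absv C \<longrightarrow> lead_coeff A = 1) \<and>
     (B \<noteq> 0 \<longrightarrow> lead_coeff B \<in> Sset h))"

definition reduced_quad :: "('a::{field,finite} poly \<Rightarrow> 'a poly \<Rightarrow> bool) \<Rightarrow> 'a \<Rightarrow> 'a poly qform \<Rightarrow> bool" where
  "reduced_quad lt h F = (case F of (A, B, C) \<Rightarrow>
     partially_reduced h F \<and>
     (absv A < absv C \<or>
      (\<forall>G. partially_reduced h G \<and> quad_equiv F G \<longrightarrow>
         lex_le lt [A, B, C] [fst G, fst (snd G), snd (snd G)])))"

definition cubic_conds :: "('a::{field,finite} poly \<Rightarrow> 'a poly \<Rightarrow> bool) \<Rightarrow> 'a \<Rightarrow> 'a poly cform \<Rightarrow> bool" where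
  "cubic_conds lt h f = (case f of (a, b, c, d) \<Rightarrow>
     reduced_quad lt h (hessian f) \<and> lead_coeff a \<in> Sset h \<and>
     (fst (snd (hessian f)) = 0 \<longrightarrow> lead_coeff d \<in> Sset h))"

definition reduced_cubic :: "('a::{field,finite} poly \<Rightarrow> 'a poly \<Rightarrow> bool) \<Rightarrow> 'a \<Rightarrow> 'a poly cform \<Rightarrow> bool" where
  "reduced_cubic lt h f = (case f of (a, b, c, d) \<Rightarrow>
     cubic_conds lt h f \<and>
     (unusual (quad_disc (hessian f)) \<longrightarrow>
       (\<forall>g. cubic_equiv f g \<and> hessian g = hessian f \<and> cubic_conds lt h g \<longrightarrow>
          (case g of (a', b', c', d') \<Rightarrow> lex_le lt [a, b, c, d] [a', b', c', d']))))"

definition primitive_cubic :: "'a::field poly cform \<Rightarrow> bool" where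
  "primitive_cubic f = (case f of (a, b, c, d) \<Rightarrow>
     (\<forall>g. g dvd a \<and> g dvd b \<and> g dvd c \<and> g dvd d \<longrightarrow> is_unit g))"

text \<open>Irreducible: nonzero and not a product of a linear form (e x + g y) and a
  quadratic form (A x^2 + B x y + C y^2) with coefficients in F_q[t].\<close>
definition irreducible_cubic :: "'a::field poly cform \<Rightarrow> bool" where
  "irreducible_cubic f = (case f of (a, b, c, d) \<Rightarrow>
     (a, b, c, d) \<noteq> (0, 0, 0, 0) \<and>
     \<not> (\<exists>e g A B C. a = e*A \<and> b = e*B + g*A \<and> c = e*C + g*B \<and> d = g*C))"

end

theory Submission
  imports Defs "HOL-Number_Theory.Residues"
begin

text \<open>Let \<open>(P, Q, R)\<close> be the Hessian. Reducedness gives \<open>|Q| < |P| \<le> |R|\<close>, so its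
  discriminant \<open>Q\<^sup>2 - 4PR = -3D\<close> has degree \<open>deg P + deg R\<close> and leading coefficient
  \<open>-4 sgn P sgn R\<close>. Imaginary or unusual then means that the leading terms of \<open>P u\<^sup>2\<close>
  and \<open>9R v\<^sup>2\<close> never cancel: equal degrees force \<open>deg P + deg R\<close> to be even, and
  \<open>sgn P x\<^sup>2 + 9 sgn R y\<^sup>2 = 0\<close> would make \<open>-4 sgn P sgn R = (6 sgn R y / x)\<^sup>2\<close> a square.
  In the syzygies \<open>P\<^sup>2 = P b\<^sup>2 - 3Q ab + 9R a\<^sup>2\<close> and \<open>R\<^sup>2 = R c\<^sup>2 - 3Q cd + 9P d\<^sup>2\<close> the
  middle terms are too small to matter, so \<open>deg P + 2 deg b\<close> and \<open>deg R + 2 deg a\<close> are at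
  most \<open>2 deg P\<close>, and \<open>deg R + 2 deg c\<close> and \<open>deg P + 2 deg d\<close> at most \<open>2 deg R\<close>.
  Together with \<open>deg P \<le> deg R\<close> and \<open>|D| = q\<^bsup>deg P + deg R\<^esup>\<close> this gives the four bounds.\<close>

lemma of_nat_neq_0_if_coprime_card:
  assumes "coprime (card (UNIV :: 'a::{field,finite} set)) n"
  shows "(of_nat n :: 'a) \<noteq> 0"
proof
  assume "(of_nat n :: 'a) = 0"
  then have "CHAR('a) dvd n" by (simp only: of_nat_eq_0_iff_char_dvd)
  with CHAR_dvd_CARD[where 'a='a] assms have "is_unit CHAR('a)"
    using coprime_common_divisor by blast
  then show False by simp
qed

lemma
  assumes "coprime (card (UNIV :: 'a::{field,finite} set)) 6"
  shows two_neq_0_if_coprime_card_6: "(2::'a) \<noteq> 0"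
    and three_neq_0_if_coprime_card_6: "(3::'a) \<noteq> 0"
proof -
  have "(2::'a) * 3 \<noteq> 0"
    using of_nat_neq_0_if_coprime_card[OF assms] by simp
  then show "(2::'a) \<noteq> 0" "(3::'a) \<noteq> 0"
    unfolding mult_eq_0_iff by auto
qed

lemma card_UNIV_field_gt_1: "1 < card (UNIV :: 'a::{field,finite} set)"
proof -
  have "card {0::'a, 1} \<le> card (UNIV :: 'a set)" by (rule card_mono) auto
  then show ?thesis by simp
qed

lemma absv_0 [simp]: "absv 0 = 0"
  by (simp add: absv_def)

lemma absv_less_absv_iff:
  fixes X Y :: "'a::{field,finite} poly"
  shows "Y \<noteq> 0 \<Longrightarrow> absv X < absv Y \<longleftrightarrow> X = 0 \<or> degree X < degree Y"
  using power_strict_increasing_iff[OF card_UNIV_field_gt_1[where 'a='a]]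
  by (auto simp: absv_def finite_UNIV_card_ge_0)

lemma absv_le_absv_iff:
  fixes X Y :: "'a::{field,finite} poly"
  shows "X \<noteq> 0 \<Longrightarrow> Y \<noteq> 0 \<Longrightarrow> absv X \<le> absv Y \<longleftrightarrow> degree X \<le> degree Y"
  using power_increasing_iff[OF card_UNIV_field_gt_1[where 'a='a]]
  by (auto simp: absv_def)

lemma absv_le_absv_powr:
  fixes X Y :: "'a::{field,finite} poly"
  assumes "Y \<noteq> 0" "k > 0" "X \<noteq> 0 \<Longrightarrow> k * degree X \<le> degree Y"
  shows "real (absv X) \<le> real (absv Y) powr (1 / real k)"
proof (cases "X = 0")
  case False
  define q where "q = real (card (UNIV :: 'a set))"
  have q: "1 \<le> q" using card_UNIV_field_gt_1[where 'a='a] by (simp add: q_def)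
  have "real (absv X) = q powr real (degree X)"
    using False q by (simp add: absv_def q_def powr_realpow)
  also have "\<dots> \<le> q powr (real (degree Y) / real k)"
    using assms False q by (intro powr_mono) (auto simp: field_simps simp flip: of_nat_mult)
  also have "\<dots> = real (absv Y) powr (1 / real k)"
    using assms(1) q by (simp add: absv_def q_def powr_powr flip: powr_realpow)
  finally show ?thesis .
qed (simp add: absv_def)

lemma partially_reduced_degrees:
  assumes "partially_reduced h (P, Q, R)"
  shows "P \<noteq> 0" "R \<noteq> 0" "Q \<noteq> 0 \<Longrightarrow> degree Q < degree P" "degree P \<le> degree R"
proof -
  have QP: "absv Q < absv P" and PR: "absv P \<le> absv R"
    using assms by (simp_all add: partially_reduced_def)
  show P: "P \<noteq> 0" and R: "R \<noteq> 0"
    using QP PR by auto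
  show "Q \<noteq> 0 \<Longrightarrow> degree Q < degree P"
    using QP P by (simp add: absv_less_absv_iff)
  show "degree P \<le> degree R"
    using PR P R by (simp add: absv_le_absv_iff)
qed

lemma diagonal_form_nonzero_if_not_square:
  fixes p r x y :: "'a::field"
  assumes "\<nexists>z. -4 * p * r = z * z" and "x \<noteq> 0"
  shows "p * x^2 + 9 * r * y^2 \<noteq> 0"
proof
  assume "p * x^2 + 9 * r * y^2 = 0"
  moreover have "-4 * p * r * x^2 = -4 * r * (p * x^2 + 9 * r * y^2) + (6 * r * y)^2"
    by (simp add: algebra_simps power2_eq_square)
  ultimately have "-4 * p * r * x^2 = (6 * r * y)^2"
    by simp
  then have "-4 * p * r = (6 * r * y / x) * (6 * r * y / x)"
    using \<open>x \<noteq> 0\<close> by (simp add: field_simps power2_eq_square)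
  with assms(1) show False by blast
qed

lemma degree_add_eq_max:
  fixes A C :: "'a::comm_ring_1 poly"
  assumes "degree A = degree C \<Longrightarrow> lead_coeff A + lead_coeff C \<noteq> 0"
  shows "degree (A + C) = max (degree A) (degree C)"
proof (cases "degree A = degree C")
  case True
  then have "Polynomial.coeff (A + C) (degree C) \<noteq> 0"
    using assms by simp
  then have "degree C \<le> degree (A + C)"
    by (rule le_degree)
  with True show ?thesis
    using degree_add_le_max[of A C] by simp
next
  case False
  then show ?thesis
    by (cases "degree A < degree C") (simp_all add: degree_add_eq_left degree_add_eq_right)
qed

lemma degree_binary_quadratic_ge:
  fixes P K S u v :: "'a::idom poly"
  assumes P: "P \<noteq> 0" and S: "S \<noteq> 0"
    and K: "K \<noteq> 0 \<Longrightarrow> 2 * degree K < degree P + degree S"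
    and aniso: "\<And>x y. even (degree P + degree S) \<Longrightarrow> x \<noteq> 0 \<Longrightarrow> y \<noteq> 0 \<Longrightarrow>
        lead_coeff P * x^2 + lead_coeff S * y^2 \<noteq> 0"
    and u: "u \<noteq> 0"
  shows "degree P + 2 * degree u \<le> degree (P * u^2 + K * u * v + S * v^2)"
proof (cases "v = 0")
  case True
  then show ?thesis
    using P u by (simp add: degree_mult_eq degree_power_eq)
next
  case v: False
  define A where "A = P * u^2"
  define C where "C = S * v^2"
  have dA: "degree A = degree P + 2 * degree u" and dC: "degree C = degree S + 2 * degree v"
    using P S u v by (simp_all add: A_def C_def degree_mult_eq degree_power_eq)
  have "lead_coeff A + lead_coeff C \<noteq> 0" if "degree A = degree C"
  proof -
    have "even (degree P + degree S)"
      using that dA dC by presburger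
    then show ?thesis
      using aniso u v by (simp add: A_def C_def lead_coeff_mult lead_coeff_power)
  qed
  then have dAC: "degree (A + C) = max (degree A) (degree C)"
    by (rule degree_add_eq_max)
  have "degree (K * u * v) < degree (A + C)" if "K \<noteq> 0"
    using K[OF that] that u v dA dC dAC by (simp add: degree_mult_eq)
  then have "degree (A + C + K * u * v) = degree (A + C)"
    by (cases "K = 0") (simp_all add: degree_add_eq_left)
  moreover have "P * u^2 + K * u * v + S * v^2 = A + C + K * u * v"
    by (simp add: A_def C_def algebra_simps)
  ultimately have "degree (P * u^2 + K * u * v + S * v^2) = max (degree A) (degree C)"
    using dAC by (simp only:)
  then show ?thesis
    using dA by simp
qed

lemma degree_binary_quadratic_ge':
  fixes P K S u v :: "'a::idom poly"
  assumes "P \<noteq> 0" and "S \<noteq> 0"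
    and "K \<noteq> 0 \<Longrightarrow> 2 * degree K < degree P + degree S"
    and "\<And>x y. even (degree P + degree S) \<Longrightarrow> x \<noteq> 0 \<Longrightarrow> y \<noteq> 0 \<Longrightarrow>
        lead_coeff P * x^2 + lead_coeff S * y^2 \<noteq> 0"
    and "v \<noteq> 0"
  shows "degree S + 2 * degree v \<le> degree (P * u^2 + K * u * v + S * v^2)"
proof -
  have "degree S + 2 * degree v \<le> degree (S * v^2 + K * v * u + P * u^2)"
    using assms by (intro degree_binary_quadratic_ge) (auto simp: add.commute)
  then show ?thesis
    by (simp add: algebra_simps)
qed

lemma hessian_syzygies:
  fixes a b c d :: "'a::comm_ring_1"
  assumes "hessian (a, b, c, d) = (P, Q, R)"
  shows "P^2 = P * b^2 + (-3 * Q) * b * a + 9 * R * a^2"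
    and "R^2 = R * c^2 + (-3 * Q) * c * d + 9 * P * d^2"
proof -
  have P: "P = b^2 - 3 * a * c" and Q: "Q = b * c - 9 * a * d" and R: "R = c^2 - 3 * b * d"
    using assms by (simp_all add: hessian_def)
  show "P^2 = P * b^2 + (-3 * Q) * b * a + 9 * R * a^2"
    and "R^2 = R * c^2 + (-3 * Q) * c * d + 9 * P * d^2"
    unfolding P Q R by (simp_all add: algebra_simps power2_eq_square)
qed

lemma quad_disc_hessian: "quad_disc (hessian f) = -3 * cubic_disc f"
  by (cases f) (simp add: quad_disc_def hessian_def cubic_disc_def algebra_simps
      power2_eq_square power3_eq_cube)

lemma quad_disc_degree_lead_coeff:
  fixes P Q R :: "'a::field poly"
  assumes "(2::'a) \<noteq> 0" "P \<noteq> 0" "R \<noteq> 0"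
    and "Q \<noteq> 0 \<Longrightarrow> 2 * degree Q < degree P + degree R"
  shows "degree (quad_disc (P, Q, R)) = degree P + degree R"
    and "lead_coeff (quad_disc (P, Q, R)) = -4 * lead_coeff P * lead_coeff R"
    and "quad_disc (P, Q, R) \<noteq> 0"
proof -
  have "(2::'a) * 2 \<noteq> 0"
    using assms(1) by (simp only: mult_eq_0_iff) simp
  then have four: "(4::'a) \<noteq> 0"
    by simp
  define N where "N = -4 * P * R"
  have N: "degree N = degree P + degree R" "lead_coeff N = -4 * lead_coeff P * lead_coeff R"
    using four assms(2,3)
    by (simp_all add: N_def numeral_mult_conv_smult degree_mult_eq coeff_mult_degree_sum)
  have disc: "quad_disc (P, Q, R) = Q^2 + N"
    by (simp add: quad_disc_def N_def)
  have "degree (quad_disc (P, Q, R)) = degree N \<and> lead_coeff (quad_disc (P, Q, R)) = lead_coeff N"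
  proof (cases "Q = 0")
    case False
    then have "degree (Q^2) < degree N"
      using assms(4) N by (simp add: degree_power_eq)
    then show ?thesis
      unfolding disc by (simp add: degree_add_eq_right lead_coeff_add_le coeff_eq_0)
  qed (unfold disc, simp)
  then show "degree (quad_disc (P, Q, R)) = degree P + degree R"
    and lead: "lead_coeff (quad_disc (P, Q, R)) = -4 * lead_coeff P * lead_coeff R"
    using N by metis+
  show "quad_disc (P, Q, R) \<noteq> 0"
    using lead four assms(2,3) by auto
qed

lemma hessian_coefficient_degrees:
  fixes a b c d P Q R :: "'a::field poly"
  assumes three: "(3::'a) \<noteq> 0"
    and H: "hessian (a, b, c, d) = (P, Q, R)"
    and P: "P \<noteq> 0" and R: "R \<noteq> 0"
    and QP: "Q \<noteq> 0 \<Longrightarrow> degree Q < degree P" and PR: "degree P \<le> degree R"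
    and aniso: "odd (degree P + degree R) \<or> (\<nexists>z. -4 * lead_coeff P * lead_coeff R = z * z)"
  shows "b \<noteq> 0 \<Longrightarrow> 2 * degree b \<le> degree P"
    and "a \<noteq> 0 \<Longrightarrow> degree R + 2 * degree a \<le> 2 * degree P"
    and "c \<noteq> 0 \<Longrightarrow> 2 * degree c \<le> degree R"
    and "d \<noteq> 0 \<Longrightarrow> degree P + 2 * degree d \<le> 2 * degree R"
proof -
  have "(3::'a) * 3 \<noteq> 0"
    using three by (simp only: mult_eq_0_iff) simp
  then have nine: "(9::'a) \<noteq> 0"
    by simp
  have middle: "2 * degree (-3 * Q) < degree P + degree R"
    "2 * degree (-3 * Q) < degree R + degree P" if "-3 * Q \<noteq> 0"
    using that QP PR three by (simp_all add: numeral_mult_conv_smult)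
  have not_square: "\<nexists>z. -4 * lead_coeff P * lead_coeff R = z * z"
    "\<nexists>z. -4 * lead_coeff R * lead_coeff P = z * z" if "even (degree P + degree R)"
    using aniso that by (simp_all add: mult.commute mult.left_commute)
  have leading_P: "lead_coeff P * x^2 + 9 * lead_coeff R * y^2 \<noteq> 0"
    if "even (degree P + degree R)" "x \<noteq> 0" "y \<noteq> 0" for x y
    using not_square(1) that by (simp add: diagonal_form_nonzero_if_not_square)
  have leading_R: "lead_coeff R * x^2 + 9 * lead_coeff P * y^2 \<noteq> 0"
    if "even (degree R + degree P)" "x \<noteq> 0" "y \<noteq> 0" for x y
    using not_square(2) that by (simp add: diagonal_form_nonzero_if_not_square add.commute)
  have "9 * X \<noteq> 0" "degree (9 * X) = degree X" "lead_coeff (9 * X) = 9 * lead_coeff X"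
    if "X \<noteq> 0" for X :: "'a poly"
    using nine that by (simp_all add: numeral_mult_conv_smult)
  note R9 = this[OF R] and P9 = this[OF P]
  note syz = hessian_syzygies[OF H]
  have PP: "degree (P^2) = 2 * degree P" and RR: "degree (R^2) = 2 * degree R"
    by (simp_all add: degree_power_eq P R)
  show "2 * degree b \<le> degree P" if "b \<noteq> 0"
    using degree_binary_quadratic_ge[of P "9 * R" "-3 * Q" b a, unfolded R9(3), unfolded R9(2),
        OF P R9(1) middle(1) leading_P that]
    unfolding syz(1)[symmetric] PP by simp
  show "degree R + 2 * degree a \<le> 2 * degree P" if "a \<noteq> 0"
    using degree_binary_quadratic_ge'[of P "9 * R" "-3 * Q" a b, unfolded R9(3), unfolded R9(2),
        OF P R9(1) middle(1) leading_P that]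
    unfolding syz(1)[symmetric] PP .
  show "2 * degree c \<le> degree R" if "c \<noteq> 0"
    using degree_binary_quadratic_ge[of R "9 * P" "-3 * Q" c d, unfolded P9(3), unfolded P9(2),
        OF R P9(1) middle(2) leading_R that]
    unfolding syz(2)[symmetric] RR by simp
  show "degree P + 2 * degree d \<le> 2 * degree R" if "d \<noteq> 0"
    using degree_binary_quadratic_ge'[of R "9 * P" "-3 * Q" d c, unfolded P9(3), unfolded P9(2),
        OF R P9(1) middle(2) leading_R that]
    unfolding syz(2)[symmetric] RR .
qed

theorem mainTheorem10:
  fixes a b c d :: "'a::{field,finite} poly"
    and h :: 'a
    and le lt :: "'a poly \<Rightarrow> 'a poly \<Rightarrow> bool"
  assumes q: "coprime (card (UNIV :: 'a set)) 6"
    and ord: "class.linorder le lt"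
    and h: "primitive_root h"
    and sgn: "lead_coeff (- 3 * cubic_disc (a, b, c, d)) \<in> {1, h}"
    and prim: "primitive_cubic (a, b, c, d)"
    and irr: "irreducible_cubic (a, b, c, d)"
    and red: "reduced_cubic lt h (a, b, c, d)"
    and hess: "imaginary (quad_disc (hessian (a, b, c, d))) \<or>
               unusual (quad_disc (hessian (a, b, c, d)))"
  shows "real (absv a) \<le> real (absv (cubic_disc (a, b, c, d))) powr (1/4)
       \<and> real (absv b) \<le> real (absv (cubic_disc (a, b, c, d))) powr (1/4)
       \<and> real (absv (b * c)) \<le> real (absv (cubic_disc (a, b, c, d))) powr (1/2)
       \<and> real (absv (a * d)) \<le> real (absv (cubic_disc (a, b, c, d))) powr (1/2)"
proof -
  obtain P Q R where H: "hessian (a, b, c, d) = (P, Q, R)"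
    by (metis prod_cases3)
  define D where "D = cubic_disc (a, b, c, d)"
  have two: "(2::'a) \<noteq> 0" and three: "(3::'a) \<noteq> 0"
    using q by (rule two_neq_0_if_coprime_card_6 three_neq_0_if_coprime_card_6)+
  have "partially_reduced h (P, Q, R)"
    using red H by (simp add: reduced_cubic_def cubic_conds_def reduced_quad_def)
  note PQR = partially_reduced_degrees[OF this]
  have "Q \<noteq> 0 \<Longrightarrow> 2 * degree Q < degree P + degree R"
    using PQR(3,4) by linarith
  note disc = quad_disc_degree_lead_coeff[OF two PQR(1,2) this]
  have "quad_disc (P, Q, R) = -3 * D"
    using quad_disc_hessian[of "(a, b, c, d)"] by (simp add: H D_def)
  then have D: "D \<noteq> 0" "degree D = degree P + degree R"
    using disc(1,3) three by (auto simp: numeral_mult_conv_smult)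
  have "odd (degree P + degree R) \<or> (\<nexists>z. -4 * lead_coeff P * lead_coeff R = z * z)"
    using hess disc(1,2) by (auto simp: H imaginary_def unusual_def)
  note bounds = hessian_coefficient_degrees[OF three H PQR this]
  have "real (absv a) \<le> real (absv D) powr (1 / real (4::nat))"
    using bounds(2) PQR(4) D by (intro absv_le_absv_powr) auto
  moreover have "real (absv b) \<le> real (absv D) powr (1 / real (4::nat))"
    using bounds(1) PQR(4) D by (intro absv_le_absv_powr) auto
  moreover have "real (absv (b * c)) \<le> real (absv D) powr (1 / real (2::nat))"
    using bounds(1,3) D by (intro absv_le_absv_powr) (auto simp: degree_mult_eq)
  moreover have "real (absv (a * d)) \<le> real (absv D) powr (1 / real (2::nat))"
    using bounds(2,4) D by (intro absv_le_absv_powr) (auto simp: degree_mult_eq)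
  ultimately show ?thesis
    by (simp add: D_def)
qed

end
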